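(* Assume the standing assumptions in the context. Let $S\subsetneq S^*$ and $k=|S|$. Then $$\inf_{\alpha\in\mathbb{R},\,i\in S^*\setminus S}\mathbb{E}\Big[\big(x^\top\beta^S+\alpha\beta^*_ix_i-y\big)^2\Big]\le\mathbb{E}\big[(x^\top\beta^S-y)^2\big]-\frac{1}{s^*-k}\,\frac{\rho}{L}\,\mathbb{E}\Big[\big(x^\top(\beta^*-\beta^S)\big)^2\Big].$$
   Context: Standing assumptions: $(x,y)$ random with $x\in\mathbb{R}^d$, $y\in\mathbb{R}$; $\mathbb{E}[x]=0$; $y=\langle\beta^*,x\rangle+\epsilon$ with $\mathbb{E}[\epsilon\mid x]=0$; $S^*=\mathrm{supp}(\beta^* )$, $s^*=|S^*|$; $\Sigma$ the covariance of $x$, $\Sigma_F$ its principal submatrix on $F$; there are $0<\rho\le L$ with all eigenvalues of $\Sigma_F$ in $[\rho,L]$ for all $|F|=s^*$; for $|F|=s^*$, $\mu_F:=\max_{j\notin F}\|\Sigma_F^{-1}\mathrm{Cov}(x_F,x_j)\|_1<1$; $|y|<1$ and $\|x\|_\infty<M$ almost surely. $\mathcal{R}(\beta)=\mathbb{E}[(y-\langle x,\beta\rangle)^2]$ and $\beta^S=\arg\min_{\mathrm{supp}(\beta)\subseteq S}\mathcal{R}(\beta)$. *)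

theory Defs
  imports "HOL-Probability.Probability"
begin

definition supp :: "('d \<Rightarrow> real) \<Rightarrow> 'd set" where
  "supp b = {j. b j \<noteq> 0}"

definition lin :: "('d::finite \<Rightarrow> real) \<Rightarrow> ('w \<Rightarrow> 'd \<Rightarrow> real) \<Rightarrow> 'w \<Rightarrow> real" where
  "lin b X w = (\<Sum>j\<in>UNIV. b j * X w j)"

definition covm :: "'w measure \<Rightarrow> ('w \<Rightarrow> 'd \<Rightarrow> real) \<Rightarrow> 'd \<Rightarrow> 'd \<Rightarrow> real" where
  "covm M X j k = (\<integral>w. (X w j - (\<integral>v. X v j \<partial>M)) * (X w k - (\<integral>v. X v k \<partial>M)) \<partial>M)"

definition eigval_on :: "('d \<Rightarrow> 'd \<Rightarrow> real) \<Rightarrow> 'd set \<Rightarrow> real \<Rightarrow> bool" where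
  "eigval_on A F mu \<longleftrightarrow>
     (\<exists>v. (\<exists>i\<in>F. v i \<noteq> 0) \<and> (\<forall>i\<in>F. (\<Sum>k\<in>F. A i k * v k) = mu * v i))"

definition risk :: "'w measure \<Rightarrow> ('w \<Rightarrow> 'd::finite \<Rightarrow> real) \<Rightarrow> ('w \<Rightarrow> real) \<Rightarrow> ('d \<Rightarrow> real) \<Rightarrow> real" where
  "risk M X Y b = (\<integral>w. (Y w - lin b X w)^2 \<partial>M)"

end

theory Submission
  imports Defs
begin

text \<open>
  Let r = y - x'b be the residual of b = \<beta>S and c(j) = E[x(j) r]. Optimality of b among vectors
  supported on S gives c(j) = 0 for j in S, and orthogonality of the noise to every x(j) gives
  c = \<Sigma> (\<beta>* - b). Hence the excess risk Q = E[(x'(\<beta>* - b))^2] is the inner product of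
  \<beta>* - b and c over T = S* - S, while the smallest eigenvalue of \<Sigma> on S* bounds the squared
  norm of \<beta>* - b on T by Q / \<rho>. Cauchy-Schwarz then gives \<rho> Q \<le> |T| c(i)^2 for the
  coordinate i of T with the largest |c(i)|, and adding the best multiple of x(i) to the
  predictor lowers the risk by c(i)^2 / \<Sigma>(i,i) \<ge> c(i)^2 / L.
\<close>

definition quad_form :: "('d \<Rightarrow> 'd \<Rightarrow> real) \<Rightarrow> 'd set \<Rightarrow> ('d \<Rightarrow> real) \<Rightarrow> real" where
  "quad_form A F v = (\<Sum>j\<in>F. \<Sum>k\<in>F. v j * A j k * v k)"

definition sqnorm_on :: "'d set \<Rightarrow> ('d \<Rightarrow> real) \<Rightarrow> real" where
  "sqnorm_on F v = (\<Sum>j\<in>F. (v j)^2)"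

lemma quad_form_cong: "(\<And>j. j \<in> F \<Longrightarrow> v j = w j) \<Longrightarrow> quad_form A F v = quad_form A F w"
  unfolding quad_form_def by (intro sum.cong refl) auto

lemma sqnorm_on_cong: "(\<And>j. j \<in> F \<Longrightarrow> v j = w j) \<Longrightarrow> sqnorm_on F v = sqnorm_on F w"
  unfolding sqnorm_on_def by (intro sum.cong refl) auto

lemma quad_form_scale: "quad_form A F (\<lambda>j. c * v j) = c^2 * quad_form A F v"
  unfolding quad_form_def by (simp add: sum_distrib_left power2_eq_square algebra_simps)

lemma sqnorm_on_scale: "sqnorm_on F (\<lambda>j. c * v j) = c^2 * sqnorm_on F v"
  unfolding sqnorm_on_def by (simp add: sum_distrib_left power_mult_distrib)

lemma sqnorm_on_nonneg: "0 \<le> sqnorm_on F v"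
  unfolding sqnorm_on_def by (simp add: sum_nonneg)

lemma sqnorm_on_eq_0_iff: "finite F \<Longrightarrow> sqnorm_on F v = 0 \<longleftrightarrow> (\<forall>j\<in>F. v j = 0)"
  unfolding sqnorm_on_def by (simp add: sum_nonneg_eq_0_iff)

lemma quad_form_eq_on_support:
  assumes "finite G" "F \<subseteq> G" "\<And>j. j \<in> G - F \<Longrightarrow> v j = 0"
  shows "quad_form A G v = quad_form A F v"
proof -
  have "(\<Sum>k\<in>G. v j * A j k * v k) = (\<Sum>k\<in>F. v j * A j k * v k)" for j
    using assms by (intro sum.mono_neutral_right) auto
  then have "quad_form A G v = (\<Sum>j\<in>G. \<Sum>k\<in>F. v j * A j k * v k)"
    by (simp add: quad_form_def)
  also have "\<dots> = quad_form A F v"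
    unfolding quad_form_def using assms by (intro sum.mono_neutral_right) auto
  finally show ?thesis .
qed

lemma quad_form_unit_vector:
  assumes "finite F" "i \<in> F"
  shows "quad_form A F (\<lambda>k. if k = i then 1 else 0) = A i i"
    and "sqnorm_on F (\<lambda>k. if k = i then 1 else 0) = 1"
  using assms by (simp_all add: quad_form_def sqnorm_on_def if_distrib[of "\<lambda>x. x * _"]
      if_distrib[of "\<lambda>x. _ * x"] if_distrib[of "\<lambda>x. x ^ 2"] cong: if_cong)

lemma quad_form_shift_diagonal:
  assumes "finite F"
  shows "quad_form (\<lambda>j k. A j k - (if j = k then m else 0)) F v = quad_form A F v - m * sqnorm_on F v"
proof -
  have "(\<Sum>k\<in>F. v j * (A j k - (if j = k then m else 0)) * v k)
        = (\<Sum>k\<in>F. v j * A j k * v k) - m * (v j)^2" if "j \<in> F" for j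
    using that assms by (simp add: right_diff_distrib left_diff_distrib sum_subtractf power2_eq_square
        if_distrib[of "\<lambda>z. _ * z"] if_distrib[of "\<lambda>z. z * _"] cong: if_cong)
  then show ?thesis
    by (simp add: quad_form_def sqnorm_on_def sum_subtractf sum_distrib_left)
qed

lemma linear_coeff_zero_if_quadratic_nonneg:
  fixes a b :: real
  assumes "\<And>t. 0 \<le> 2 * t * b + t^2 * a"
  shows "b = 0"
proof -
  have "0 \<le> a" using assms[of 1] assms[of "-1"] by simp
  define u where "u = b / (a + 1)"
  have b: "b = u * (a + 1)" using \<open>0 \<le> a\<close> by (simp add: u_def)
  have "0 \<le> 2 * (-u) * b + (-u)^2 * a" by (rule assms)
  also have "\<dots> = - (u^2 * (a + 2))" by (simp add: b power2_eq_square algebra_simps)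
  finally have "u^2 \<le> 0" using \<open>0 \<le> a\<close> by (simp add: mult_le_0_iff)
  then show "b = 0" using b by simp
qed

lemma quad_form_add_scaled:
  assumes "\<And>i k. i \<in> F \<Longrightarrow> k \<in> F \<Longrightarrow> B i k = B k i"
  shows "quad_form B F (\<lambda>j. x j + t * y j)
         = quad_form B F x + 2 * t * (\<Sum>j\<in>F. \<Sum>k\<in>F. y j * B j k * x k) + t^2 * quad_form B F y"
proof -
  have swap: "(\<Sum>j\<in>F. \<Sum>k\<in>F. x j * B j k * y k) = (\<Sum>j\<in>F. \<Sum>k\<in>F. y j * B j k * x k)"
    by (subst sum.swap) (use assms in \<open>simp add: mult_ac\<close>)
  have "quad_form B F (\<lambda>j. x j + t * y j)
        = (\<Sum>j\<in>F. \<Sum>k\<in>F. x j * B j k * x k + t * (x j * B j k * y k)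
             + t * (y j * B j k * x k) + t^2 * (y j * B j k * y k))"
    unfolding quad_form_def by (intro sum.cong refl) (simp add: algebra_simps power2_eq_square)
  also have "\<dots> = quad_form B F x + t * (\<Sum>j\<in>F. \<Sum>k\<in>F. x j * B j k * y k)
          + t * (\<Sum>j\<in>F. \<Sum>k\<in>F. y j * B j k * x k) + t^2 * quad_form B F y"
    unfolding quad_form_def by (simp add: sum.distrib sum_distrib_left)
  finally show ?thesis using swap by simp
qed

lemma quad_form_nonneg_null_imp_kernel:
  assumes "finite F" and sym: "\<And>i k. i \<in> F \<Longrightarrow> k \<in> F \<Longrightarrow> B i k = B k i"
    and nonneg: "\<And>v. 0 \<le> quad_form B F v" and null: "quad_form B F x = 0" and "i \<in> F"
  shows "(\<Sum>k\<in>F. B i k * x k) = 0"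
proof (rule linear_coeff_zero_if_quadratic_nonneg)
  fix t :: real
  define e where "e = (\<lambda>k. if k = i then 1 else (0::real))"
  have "(\<Sum>j\<in>F. \<Sum>k\<in>F. e j * B j k * x k) = (\<Sum>j\<in>F. e j * (\<Sum>k\<in>F. B j k * x k))"
    by (simp add: sum_distrib_left mult.assoc)
  also have "\<dots> = (\<Sum>j\<in>F. if j = i then (\<Sum>k\<in>F. B j k * x k) else 0)"
    by (intro sum.cong) (auto simp: e_def)
  also have "\<dots> = (\<Sum>k\<in>F. B i k * x k)"
    using assms(1,5) by simp
  finally have "(\<Sum>j\<in>F. \<Sum>k\<in>F. e j * B j k * x k) = (\<Sum>k\<in>F. B i k * x k)" .
  then show "0 \<le> 2 * t * (\<Sum>k\<in>F. B i k * x k) + t^2 * B i i"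
    using nonneg[of "\<lambda>j. x j + t * e j"] quad_form_add_scaled[of F B x t e, OF sym] null
      quad_form_unit_vector(1)[OF assms(1,5), of B]
    by (simp add: e_def)
qed

lemma quad_form_attains_min_on_unit_sphere:
  fixes A :: "'d::finite \<Rightarrow> 'd \<Rightarrow> real"
  assumes "F \<noteq> {}"
  obtains x where "sqnorm_on F x = 1"
    and "\<And>v. sqnorm_on F v = 1 \<Longrightarrow> quad_form A F x \<le> quad_form A F v"
proof -
  \<comment> \<open>The box only makes K compact: it contains the zero extension of every unit vector.\<close>
  define K where "K = {v::real^'d. sqnorm_on F (($) v) = 1} \<inter> cbox (-1) 1"
  have "compact K" unfolding K_def sqnorm_on_def
    by (intro closed_Int_compact compact_cbox closed_Collect_eq continuous_intros)
  obtain i where "i \<in> F" using assms by blast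
  then have "axis i 1 \<in> K"
    by (simp add: K_def mem_box_cart sqnorm_on_def axis_def if_distrib[of "\<lambda>x. x ^ 2"] cong: if_cong)
  moreover have "continuous_on K (\<lambda>v. quad_form A F (($) v))"
    unfolding quad_form_def by (intro continuous_intros)
  ultimately obtain v0 where "v0 \<in> K"
    and v0_min: "\<And>u. u \<in> K \<Longrightarrow> quad_form A F (($) v0) \<le> quad_form A F (($) u)"
    using continuous_attains_inf[OF \<open>compact K\<close>] by blast
  show thesis
  proof (rule that[of "($) v0"])
    show "sqnorm_on F (($) v0) = 1" using \<open>v0 \<in> K\<close> by (simp add: K_def)
    fix v assume v1: "sqnorm_on F v = 1"
    define u where "u = (\<chi> j. if j \<in> F then v j else 0)"
    have "\<bar>v j\<bar> \<le> 1" if "j \<in> F" for j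
      using member_le_sum[of j F "\<lambda>j. (v j)^2"] that v1 by (simp add: sqnorm_on_def abs_square_le_1)
    then have "u \<in> K"
      using v1 by (auto simp: K_def u_def mem_box_cart abs_le_iff cong: sqnorm_on_cong)
    moreover have "quad_form A F (($) u) = quad_form A F v"
      by (rule quad_form_cong) (simp add: u_def)
    ultimately show "quad_form A F (($) v0) \<le> quad_form A F v" using v0_min by metis
  qed
qed

lemma quad_form_ge_unit_min:
  assumes "finite F" and x1: "sqnorm_on F x = 1"
    and x_min: "\<And>v. sqnorm_on F v = 1 \<Longrightarrow> quad_form A F x \<le> quad_form A F v"
  shows "quad_form A F x * sqnorm_on F v \<le> quad_form A F v"
proof (cases "sqnorm_on F v = 0")
  case True
  then have "quad_form A F v = quad_form A F (\<lambda>_. 0)"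
    using assms(1) by (intro quad_form_cong) (simp add: sqnorm_on_eq_0_iff)
  with True show ?thesis by (simp add: quad_form_def)
next
  case False
  define s where "s = sqrt (sqnorm_on F v)"
  have pos: "0 < sqnorm_on F v" using False sqnorm_on_nonneg[of F v] by simp
  then have "s > 0" and s2: "s^2 = sqnorm_on F v" by (simp_all add: s_def)
  then have "sqnorm_on F (\<lambda>j. (1 / s) * v j) = 1"
    using False by (simp only: sqnorm_on_scale) (simp add: power_divide)
  then have "quad_form A F x \<le> (1 / s)^2 * quad_form A F v"
    using x_min quad_form_scale by metis
  with pos s2 show ?thesis by (simp add: field_simps)
qed

lemma min_eigval_on_exists:
  fixes A :: "'d::finite \<Rightarrow> 'd \<Rightarrow> real"
  assumes "F \<noteq> {}" and sym: "\<And>i k. i \<in> F \<Longrightarrow> k \<in> F \<Longrightarrow> A i k = A k i"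
  obtains m where "eigval_on A F m" and "\<And>v. m * sqnorm_on F v \<le> quad_form A F v"
proof -
  have "finite F" by simp
  obtain x where x1: "sqnorm_on F x = 1"
    and x_min: "\<And>v. sqnorm_on F v = 1 \<Longrightarrow> quad_form A F x \<le> quad_form A F v"
    using quad_form_attains_min_on_unit_sphere[OF assms(1)] by blast
  define m where "m = quad_form A F x"
  have min: "m * sqnorm_on F v \<le> quad_form A F v" for v
    unfolding m_def using \<open>finite F\<close> x1 x_min by (rule quad_form_ge_unit_min)
  define B where "B = (\<lambda>j k. A j k - (if j = k then m else 0))"
  have "(\<Sum>k\<in>F. B i k * x k) = 0" if "i \<in> F" for i
  proof (rule quad_form_nonneg_null_imp_kernel[OF \<open>finite F\<close> _ _ _ that])
    show "B i k = B k i" if "i \<in> F" "k \<in> F" for i k using sym that by (simp add: B_def)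
    show "0 \<le> quad_form B F v" for v
      using min[of v] by (simp add: B_def quad_form_shift_diagonal[OF \<open>finite F\<close>])
    show "quad_form B F x = 0"
      by (simp add: B_def quad_form_shift_diagonal[OF \<open>finite F\<close>] x1 m_def)
  qed
  then have "\<forall>i\<in>F. (\<Sum>k\<in>F. A i k * x k) = m * x i"
    by (simp add: B_def left_diff_distrib sum_subtractf if_distrib[of "\<lambda>z. z * _"] cong: if_cong)
  moreover have "\<exists>i\<in>F. x i \<noteq> 0"
    using x1 sqnorm_on_eq_0_iff[OF \<open>finite F\<close>, of x] by auto
  ultimately have "eigval_on A F m" unfolding eigval_on_def by blast
  then show thesis using min by (rule that)
qed

lemma eigval_on_uminus:
  assumes "eigval_on (\<lambda>i k. - A i k) F m"
  shows "eigval_on A F (- m)"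
proof -
  obtain v where "\<exists>i\<in>F. v i \<noteq> 0" and v: "\<And>i. i \<in> F \<Longrightarrow> (\<Sum>k\<in>F. - A i k * v k) = m * v i"
    using assms unfolding eigval_on_def by blast
  moreover have "(\<Sum>k\<in>F. A i k * v k) = - m * v i" if "i \<in> F" for i
    using v[OF that] by (simp add: sum_negf)
  ultimately show ?thesis unfolding eigval_on_def by blast
qed

lemma quad_form_bounds_of_eigval_bounds:
  fixes A :: "'d::finite \<Rightarrow> 'd \<Rightarrow> real"
  assumes "F \<noteq> {}" and sym: "\<And>i k. i \<in> F \<Longrightarrow> k \<in> F \<Longrightarrow> A i k = A k i"
    and ev: "\<And>mu. eigval_on A F mu \<Longrightarrow> rho \<le> mu \<and> mu \<le> L"
  shows "rho * sqnorm_on F v \<le> quad_form A F v" and "quad_form A F v \<le> L * sqnorm_on F v"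
proof -
  obtain m where m: "eigval_on A F m" "m * sqnorm_on F v \<le> quad_form A F v"
    using min_eigval_on_exists[of F A, OF assms(1) sym] by blast
  have "rho * sqnorm_on F v \<le> m * sqnorm_on F v"
    using ev[OF m(1)] sqnorm_on_nonneg by (intro mult_right_mono) simp_all
  with m(2) show "rho * sqnorm_on F v \<le> quad_form A F v" by linarith
  have "\<And>i k. i \<in> F \<Longrightarrow> k \<in> F \<Longrightarrow> - A i k = - A k i" using sym by simp
  then obtain m' where m': "eigval_on (\<lambda>i k. - A i k) F m'"
    "m' * sqnorm_on F v \<le> quad_form (\<lambda>i k. - A i k) F v"
    using min_eigval_on_exists[of F "\<lambda>i k. - A i k"] assms(1) by blast
  have "- m' * sqnorm_on F v \<le> L * sqnorm_on F v"
    using ev[OF eigval_on_uminus[OF m'(1)]] sqnorm_on_nonneg by (intro mult_right_mono) simp_all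
  moreover have "quad_form (\<lambda>i k. - A i k) F v = - quad_form A F v"
    by (simp add: quad_form_def sum_negf)
  ultimately show "quad_form A F v \<le> L * sqnorm_on F v" using m'(2) by simp
qed

lemma exists_coordinate_sq_ge_inner:
  fixes D c :: "'d \<Rightarrow> real"
  assumes "finite T" "T \<noteq> {}" "0 \<le> rho"
    and energy: "rho * (\<Sum>j\<in>T. (D j)^2) \<le> (\<Sum>j\<in>T. D j * c j)"
  shows "\<exists>i\<in>T. rho * (\<Sum>j\<in>T. D j * c j) \<le> real (card T) * (c i)^2"
proof -
  define Q where "Q = (\<Sum>j\<in>T. D j * c j)"
  obtain i where "i \<in> T" and i_max: "\<And>j. j \<in> T \<Longrightarrow> (c j)^2 \<le> (c i)^2"
    using Max_in[of "(\<lambda>j. (c j)^2) ` T"] Max_ge[of "(\<lambda>j. (c j)^2) ` T"] assms(1,2) by fastforce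
  have "rho * Q \<le> real (card T) * (c i)^2"
  proof (cases "Q \<le> 0")
    case True
    with \<open>0 \<le> rho\<close> have "rho * Q \<le> 0" by (rule mult_nonneg_nonpos)
    also have "0 \<le> real (card T) * (c i)^2" by simp
    finally show ?thesis .
  next
    case False
    have "rho * Q^2 \<le> rho * ((\<Sum>j\<in>T. (D j)^2) * (\<Sum>j\<in>T. (c j)^2))"
      unfolding Q_def using \<open>0 \<le> rho\<close> by (intro mult_left_mono Cauchy_Schwarz_ineq_sum)
    also have "\<dots> \<le> Q * (\<Sum>j\<in>T. (c j)^2)"
      using energy by (simp add: Q_def mult.assoc[symmetric] mult_right_mono sum_nonneg)
    also have "\<dots> \<le> Q * (real (card T) * (c i)^2)"
      using False i_max sum_bounded_above[of T "\<lambda>j. (c j)^2" "(c i)^2"] by simp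
    finally show ?thesis using False by (simp add: power2_eq_square mult.assoc)
  qed
  with \<open>i \<in> T\<close> show ?thesis by (auto simp: Q_def)
qed

lemma scaled_le_of_mult_le:
  fixes n rho g L Q c :: real
  assumes "0 < n" "0 < rho" "rho \<le> g" "g \<le> L" "rho * Q \<le> n * c^2"
  shows "1 / n * (rho / L) * Q \<le> c^2 / g"
proof -
  have "1 / n * (rho / L) * Q = (rho * Q) / n / L" by simp
  also have "\<dots> \<le> c^2 / L"
    using assms by (intro divide_right_mono) (simp_all add: pos_divide_le_eq mult.commute)
  also have "\<dots> \<le> c^2 / g"
    using assms by (intro divide_left_mono) simp_all
  finally show ?thesis .
qed

definition bounded_rv :: "'w measure \<Rightarrow> ('w \<Rightarrow> real) \<Rightarrow> bool" where
  "bounded_rv M f \<longleftrightarrow> f \<in> borel_measurable M \<and> (\<exists>B. AE w in M. \<bar>f w\<bar> \<le> B)"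

lemma bounded_rvI: "f \<in> borel_measurable M \<Longrightarrow> (AE w in M. \<bar>f w\<bar> \<le> B) \<Longrightarrow> bounded_rv M f"
  unfolding bounded_rv_def by blast

lemma bounded_rv_const: "bounded_rv M (\<lambda>w. c)"
  unfolding bounded_rv_def by (intro conjI exI[of _ "\<bar>c\<bar>"]) auto

lemma bounded_rv_add: "bounded_rv M f \<Longrightarrow> bounded_rv M g \<Longrightarrow> bounded_rv M (\<lambda>w. f w + g w)"
  unfolding bounded_rv_def
proof (elim conjE exE, intro conjI)
  fix B C assume "AE w in M. \<bar>f w\<bar> \<le> B" "AE w in M. \<bar>g w\<bar> \<le> C"
  then have "AE w in M. \<bar>f w + g w\<bar> \<le> B + C"
    by eventually_elim (rule order_trans[OF abs_triangle_ineq add_mono])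
  then show "\<exists>B. AE w in M. \<bar>f w + g w\<bar> \<le> B" ..
qed auto

lemma bounded_rv_mult: "bounded_rv M f \<Longrightarrow> bounded_rv M g \<Longrightarrow> bounded_rv M (\<lambda>w. f w * g w)"
  unfolding bounded_rv_def
proof (elim conjE exE, intro conjI)
  fix B C assume "AE w in M. \<bar>f w\<bar> \<le> B" "AE w in M. \<bar>g w\<bar> \<le> C"
  then have "AE w in M. \<bar>f w * g w\<bar> \<le> B * C" by eventually_elim (simp add: abs_mult mult_mono')
  then show "\<exists>B. AE w in M. \<bar>f w * g w\<bar> \<le> B" ..
qed auto

lemma bounded_rv_diff: "bounded_rv M f \<Longrightarrow> bounded_rv M g \<Longrightarrow> bounded_rv M (\<lambda>w. f w - g w)"
  using bounded_rv_add[of M f "\<lambda>w. (-1) * g w"] bounded_rv_mult[OF bounded_rv_const[of M "-1"], of g]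
  by simp

lemma bounded_rv_sum:
  "(\<And>i. i \<in> I \<Longrightarrow> bounded_rv M (f i)) \<Longrightarrow> bounded_rv M (\<lambda>w. \<Sum>i\<in>I. f i w)"
proof (induction I rule: infinite_finite_induct)
  case (insert x I)
  then show ?case using bounded_rv_add[of M "f x" "\<lambda>w. \<Sum>i\<in>I. f i w"] by simp
qed (simp_all add: bounded_rv_const)

lemma bounded_rv_lin: "(\<And>j. bounded_rv M (\<lambda>w. X w j)) \<Longrightarrow> bounded_rv M (lin b X)"
  unfolding lin_def[abs_def] by (intro bounded_rv_sum bounded_rv_mult bounded_rv_const)

lemma (in finite_measure) integrable_bounded_rv:
  assumes "bounded_rv M f"
  shows "integrable M f"
proof -
  obtain B where "f \<in> borel_measurable M" "AE w in M. \<bar>f w\<bar> \<le> B"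
    using assms unfolding bounded_rv_def by blast
  then show ?thesis by (intro integrable_const_bound[where B = B]) simp_all
qed

lemma (in finite_measure) integral_add_scaled_sq:
  assumes f: "bounded_rv M f" and g: "bounded_rv M g"
  shows "(\<integral>w. (f w + t * g w)^2 \<partial>M)
         = (\<integral>w. (f w)^2 \<partial>M) + 2 * t * (\<integral>w. f w * g w \<partial>M) + t^2 * (\<integral>w. (g w)^2 \<partial>M)"
proof -
  have "integrable M (\<lambda>w. f w * g w)" "integrable M (\<lambda>w. (f w)^2)" "integrable M (\<lambda>w. (g w)^2)"
    using bounded_rv_mult[OF f g] bounded_rv_mult[OF f f] bounded_rv_mult[OF g g]
    by (simp_all add: integrable_bounded_rv power2_eq_square)
  then have "(\<integral>w. (f w)^2 + ((2 * t) * (f w * g w) + t^2 * (g w)^2) \<partial>M)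
      = (\<integral>w. (f w)^2 \<partial>M) + 2 * t * (\<integral>w. f w * g w \<partial>M) + t^2 * (\<integral>w. (g w)^2 \<partial>M)"
    by simp
  moreover have "(\<integral>w. (f w + t * g w)^2 \<partial>M)
      = (\<integral>w. (f w)^2 + ((2 * t) * (f w * g w) + t^2 * (g w)^2) \<partial>M)"
    by (rule Bochner_Integration.integral_cong) (simp_all add: power2_eq_square algebra_simps)
  ultimately show ?thesis by simp
qed

lemma bounded_rv_cong: "bounded_rv M f \<Longrightarrow> (\<And>w. w \<in> space M \<Longrightarrow> f w = g w) \<Longrightarrow> bounded_rv M g"
  unfolding bounded_rv_def
proof (elim conjE exE, intro conjI)
  fix B assume "AE w in M. \<bar>f w\<bar> \<le> B" "\<And>w. w \<in> space M \<Longrightarrow> f w = g w"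
  then have "AE w in M. \<bar>g w\<bar> \<le> B" by (auto elim!: AE_mp intro!: AE_I2)
  then show "\<exists>B. AE w in M. \<bar>g w\<bar> \<le> B" ..
qed (use measurable_cong in blast)

lemma finite_measure_vimage_sigma_finite_subalgebra:
  assumes "finite_measure M" and "X \<in> measurable M N"
  shows "sigma_finite_subalgebra M (vimage_algebra (space M) X N)"
proof (rule finite_measure_subalgebra_is_sigma_finite)
  show "finite_measure_subalgebra M (vimage_algebra (space M) X N)"
    using assms sets_image_in_sets[OF refl assms(2)]
    by (simp add: finite_measure_subalgebra_def finite_measure_subalgebra_axioms_def subalgebra_def)
qed

lemma (in sigma_finite_subalgebra) integral_mult_eq_0_if_cond_exp_eq_0:
  assumes "f \<in> borel_measurable F" "g \<in> borel_measurable M" "integrable M (\<lambda>w. f w * g w)"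
    and "AE w in M. real_cond_exp M F g w = 0"
  shows "(\<integral>w. f w * g w \<partial>M) = 0"
proof -
  have "(\<integral>w. f w * g w \<partial>M) = (\<integral>w. f w * real_cond_exp M F g w \<partial>M)"
    using real_cond_exp_intg(2)[OF assms(3,1,2)] by simp
  also have "\<dots> = 0"
    using assms(4) by (intro integral_eq_zero_AE) auto
  finally show ?thesis .
qed

locale bounded_linear_model = prob_space M
  for M :: "'w measure" and X :: "'w \<Rightarrow> 'd::finite \<Rightarrow> real" and Y :: "'w \<Rightarrow> real"
    and bstar :: "'d \<Rightarrow> real" +
  assumes bounded_X: "\<And>j. bounded_rv M (\<lambda>w. X w j)"
    and bounded_Y: "bounded_rv M Y"
    and noise_orthogonal: "\<And>j. (\<integral>w. X w j * (Y w - lin bstar X w) \<partial>M) = 0"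
begin

definition gram :: "'d \<Rightarrow> 'd \<Rightarrow> real" where
  "gram j k = (\<integral>w. X w j * X w k \<partial>M)"

definition corr :: "('d \<Rightarrow> real) \<Rightarrow> 'd \<Rightarrow> real" where
  "corr b j = (\<integral>w. X w j * (Y w - lin b X w) \<partial>M)"

lemma gram_sym: "gram j k = gram k j"
  by (simp add: gram_def mult.commute)

lemma bounded_residual: "bounded_rv M (\<lambda>w. Y w - lin b X w)"
  by (intro bounded_rv_diff bounded_Y bounded_rv_lin bounded_X)

lemma integrable_bounded_mult:
  "bounded_rv M f \<Longrightarrow> bounded_rv M g \<Longrightarrow> integrable M (\<lambda>w. f w * g w)"
  by (intro integrable_bounded_rv bounded_rv_mult)

lemma risk_add_coordinate:
  "(\<integral>w. (Y w - lin b X w - t * X w i)^2 \<partial>M) = risk M X Y b - 2 * t * corr b i + t^2 * gram i i"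
  using integral_add_scaled_sq[OF bounded_residual bounded_X, of b "-t" i]
  by (simp add: risk_def corr_def gram_def power2_eq_square mult.commute)

lemma integral_lin_sq: "(\<integral>w. (lin D X w)^2 \<partial>M) = quad_form gram UNIV D"
proof -
  have "(\<integral>w. (lin D X w)^2 \<partial>M)
      = (\<integral>w. (\<Sum>j\<in>UNIV. \<Sum>k\<in>UNIV. D j * D k * (X w j * X w k)) \<partial>M)"
    by (simp add: lin_def power2_eq_square sum_product mult_ac)
  also have "\<dots> = (\<Sum>j\<in>UNIV. \<Sum>k\<in>UNIV. D j * D k * gram j k)"
    by (simp add: gram_def integrable_bounded_mult bounded_X)
  finally show ?thesis by (simp add: quad_form_def mult_ac)
qed

lemma corr_eq_gram: "corr b j = (\<Sum>k\<in>UNIV. gram j k * (bstar k - b k))"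
proof -
  have "corr b j = (\<integral>w. (\<Sum>k\<in>UNIV. (bstar k - b k) * (X w j * X w k))
                             + X w j * (Y w - lin bstar X w) \<partial>M)"
    unfolding corr_def
    by (intro Bochner_Integration.integral_cong)
      (simp_all add: lin_def algebra_simps sum_subtractf sum_distrib_left)
  also have "\<dots> = (\<Sum>k\<in>UNIV. (bstar k - b k) * gram j k)"
    by (simp add: noise_orthogonal gram_def integrable_bounded_mult bounded_X bounded_residual)
  finally show ?thesis by (simp add: mult.commute)
qed

lemma excess_risk_eq_corr:
  "(\<integral>w. (lin (\<lambda>j. bstar j - b j) X w)^2 \<partial>M) = (\<Sum>j\<in>UNIV. (bstar j - b j) * corr b j)"
  by (simp add: integral_lin_sq corr_eq_gram quad_form_def sum_distrib_left mult_ac)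

lemma corr_eq_0_if_risk_min:
  assumes "supp b \<subseteq> S" and min: "\<And>b'. supp b' \<subseteq> S \<Longrightarrow> risk M X Y b \<le> risk M X Y b'"
    and "j \<in> S"
  shows "corr b j = 0"
proof (rule linear_coeff_zero_if_quadratic_nonneg)
  fix t :: real
  define b' where "b' = (\<lambda>k. b k - (if k = j then t else 0))"
  have "supp b' \<subseteq> S" using assms(1,3) by (auto simp: supp_def b'_def)
  have lin_b': "lin b' X w = lin b X w - t * X w j" for w
    by (simp add: lin_def b'_def left_diff_distrib sum_subtractf if_distrib[of "\<lambda>z. z * _"] cong: if_cong)
  have "risk M X Y b' = (\<integral>w. (Y w - lin b X w - (-t) * X w j)^2 \<partial>M)"
    unfolding risk_def lin_b' by (simp add: algebra_simps)
  also have "\<dots> = risk M X Y b + 2 * t * corr b j + t^2 * gram j j"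
    unfolding risk_add_coordinate by simp
  finally show "0 \<le> 2 * t * corr b j + t^2 * gram j j"
    using min[OF \<open>supp b' \<subseteq> S\<close>] by simp
qed

lemma risk_best_coordinate_step:
  assumes "0 < gram i i"
  shows "(\<integral>w. (Y w - lin b X w - (corr b i / gram i i) * X w i)^2 \<partial>M)
         = risk M X Y b - (corr b i)^2 / gram i i"
  unfolding risk_add_coordinate using assms by (simp add: power2_eq_square field_simps)

lemma exists_coordinate_with_large_corr:
  assumes "S \<subset> supp bstar" and "supp bS \<subseteq> S"
    and min: "\<And>b. supp b \<subseteq> S \<Longrightarrow> risk M X Y bS \<le> risk M X Y b"
    and "0 \<le> rho" and lower: "\<And>v. rho * sqnorm_on (supp bstar) v \<le> quad_form gram (supp bstar) v"
  shows "\<exists>i\<in>supp bstar - S. rho * (\<integral>w. (lin (\<lambda>j. bstar j - bS j) X w)^2 \<partial>M)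
           \<le> real (card (supp bstar - S)) * (corr bS i)^2"
proof -
  define D where "D = (\<lambda>j. bstar j - bS j)"
  define T where "T = supp bstar - S"
  have D0: "D j = 0" if "j \<notin> supp bstar" for j
    using that assms(1,2) by (auto simp: D_def supp_def)
  have corr0: "corr bS j = 0" if "j \<in> S" for j
    using assms(2) min that by (rule corr_eq_0_if_risk_min)
  have excess: "(\<integral>w. (lin D X w)^2 \<partial>M) = (\<Sum>j\<in>T. D j * corr bS j)"
    unfolding D_def excess_risk_eq_corr
    by (rule sum.mono_neutral_right) (use D0 corr0 in \<open>auto simp: T_def D_def\<close>)
  have "rho * (\<Sum>j\<in>T. (D j)^2) \<le> rho * sqnorm_on (supp bstar) D"
    unfolding sqnorm_on_def T_def using \<open>0 \<le> rho\<close> by (intro mult_left_mono sum_mono2) auto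
  also have "\<dots> \<le> quad_form gram (supp bstar) D" by (rule lower)
  also have "\<dots> = quad_form gram UNIV D" by (rule quad_form_eq_on_support[symmetric]) (auto simp: D0)
  also have "\<dots> = (\<Sum>j\<in>T. D j * corr bS j)" by (simp add: integral_lin_sq[symmetric] excess)
  finally have "\<exists>i\<in>T. rho * (\<Sum>j\<in>T. D j * corr bS j) \<le> real (card T) * (corr bS i)^2"
    using assms(1) \<open>0 \<le> rho\<close> by (intro exists_coordinate_sq_ge_inner) (auto simp: T_def)
  then show ?thesis unfolding excess[symmetric] by (simp add: D_def T_def)
qed

lemma greedy_step_bound:
  assumes "S \<subset> supp bstar" and "supp bS \<subseteq> S"
    and "\<And>b. supp b \<subseteq> S \<Longrightarrow> risk M X Y bS \<le> risk M X Y b"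
    and "0 < rho" and lower: "\<And>v. rho * sqnorm_on (supp bstar) v \<le> quad_form gram (supp bstar) v"
    and upper: "\<And>i. i \<in> supp bstar \<Longrightarrow> gram i i \<le> L"
  shows "(INF p \<in> (UNIV :: real set) \<times> (supp bstar - S).
            \<integral>w. (lin bS X w + fst p * bstar (snd p) * X w (snd p) - Y w)^2 \<partial>M)
           \<le> (\<integral>w. (lin bS X w - Y w)^2 \<partial>M)
              - 1 / (real (card (supp bstar)) - real (card S)) * (rho / L)
                * (\<integral>w. (lin (\<lambda>j. bstar j - bS j) X w)^2 \<partial>M)"
proof -
  define Q where "Q = (\<integral>w. (lin (\<lambda>j. bstar j - bS j) X w)^2 \<partial>M)"
  define n where "n = real (card (supp bstar - S))"
  obtain i where i: "i \<in> supp bstar - S" and large: "rho * Q \<le> n * (corr bS i)^2"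
    using exists_coordinate_with_large_corr[OF assms(1-3) _ lower] \<open>0 < rho\<close>
    unfolding Q_def n_def by fastforce
  have "rho \<le> gram i i"
    using lower[of "\<lambda>k. if k = i then 1 else 0"] i by (simp add: quad_form_unit_vector)
  with \<open>0 < rho\<close> have "0 < gram i i" by linarith
  have "0 < n" using assms(1) by (auto simp: n_def card_gt_0_iff)
  with large \<open>0 < rho\<close> \<open>rho \<le> gram i i\<close> upper[of i] i
  have gain: "1 / n * (rho / L) * Q \<le> (corr bS i)^2 / gram i i"
    by (intro scaled_le_of_mult_le) auto
  define \<alpha> where "\<alpha> = corr bS i / gram i i / bstar i"
  have "bstar i \<noteq> 0" using i by (simp add: supp_def)
  then have "(\<integral>w. (lin bS X w + \<alpha> * bstar i * X w i - Y w)^2 \<partial>M)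
      = (\<integral>w. (Y w - lin bS X w - (corr bS i / gram i i) * X w i)^2 \<partial>M)"
    by (simp add: \<alpha>_def power2_commute algebra_simps)
  also have "\<dots> = risk M X Y bS - (corr bS i)^2 / gram i i"
    using \<open>0 < gram i i\<close> by (rule risk_best_coordinate_step)
  also have "risk M X Y bS = (\<integral>w. (lin bS X w - Y w)^2 \<partial>M)"
    by (simp add: risk_def power2_commute)
  finally have "(\<integral>w. (lin bS X w + \<alpha> * bstar i * X w i - Y w)^2 \<partial>M)
      \<le> (\<integral>w. (lin bS X w - Y w)^2 \<partial>M) - 1 / n * (rho / L) * Q"
    using gain by linarith
  moreover have "n = real (card (supp bstar)) - real (card S)"
    using assms(1) by (simp add: n_def card_Diff_subset card_mono of_nat_diff)
  ultimately show ?thesis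
    using i unfolding Q_def by (intro cINF_lower2[where x = "(\<alpha>, i)"] bdd_belowI[of _ 0]) auto
qed

end

lemma bounded_linear_model_of_cond_exp:
  fixes X :: "'w \<Rightarrow> 'd::finite \<Rightarrow> real"
  assumes "prob_space M" and bounded_X: "\<And>j. bounded_rv M (\<lambda>w. X w j)" and "bounded_rv M Y"
    and model: "\<And>w. w \<in> space M \<Longrightarrow> Y w = lin bstar X w + eps w"
    and noise: "AE w in M. real_cond_exp M (vimage_algebra (space M) X (Pi\<^sub>M UNIV (\<lambda>_. borel))) eps w = 0"
  shows "bounded_linear_model M X Y bstar"
proof -
  interpret prob_space M by (rule assms(1))
  define G where "G = vimage_algebra (space M) X (Pi\<^sub>M UNIV (\<lambda>_. borel :: real measure))"
  have "(\<lambda>w j. X w j) \<in> measurable M (Pi\<^sub>M UNIV (\<lambda>_. borel :: real measure))"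
    using bounded_X by (intro measurable_PiM_single') (auto simp: bounded_rv_def)
  then interpret sigma_finite_subalgebra M G
    unfolding G_def by (intro finite_measure_vimage_sigma_finite_subalgebra) simp_all
  have X_G: "(\<lambda>w. X w j) \<in> borel_measurable G" for j
  proof -
    have "X \<in> measurable G (Pi\<^sub>M UNIV (\<lambda>_. borel :: real measure))"
      unfolding G_def by (rule measurable_vimage_algebra1) (simp add: space_PiM)
    from measurable_comp[OF this measurable_component_singleton[of j UNIV]] show ?thesis
      by (simp add: o_def)
  qed
  have "bounded_rv M (\<lambda>w. Y w - lin bstar X w)"
    by (intro bounded_rv_diff assms(3) bounded_rv_lin bounded_X)
  then have eps: "bounded_rv M eps"
    by (rule bounded_rv_cong) (simp add: model)
  have "(\<integral>w. X w j * (Y w - lin bstar X w) \<partial>M) = 0" for j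
  proof -
    have "(\<integral>w. X w j * (Y w - lin bstar X w) \<partial>M) = (\<integral>w. X w j * eps w \<partial>M)"
      by (intro Bochner_Integration.integral_cong) (simp_all add: model)
    also have "\<dots> = 0"
    proof (rule integral_mult_eq_0_if_cond_exp_eq_0[OF X_G])
      show "eps \<in> borel_measurable M" using eps by (simp add: bounded_rv_def)
      show "integrable M (\<lambda>w. X w j * eps w)"
        by (intro integrable_bounded_rv bounded_rv_mult bounded_X eps)
    qed (use noise in \<open>simp add: G_def\<close>)
    finally show ?thesis .
  qed
  with bounded_X assms(3) show ?thesis by unfold_locales
qed

theorem mainTheorem9:
  fixes M :: "'w measure" and X :: "'w \<Rightarrow> 'd::finite \<Rightarrow> real" and Y :: "'w \<Rightarrow> real"
    and eps :: "'w \<Rightarrow> real" and bstar :: "'d \<Rightarrow> real"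
    and rho L Mx :: real and S :: "'d set" and bS :: "'d \<Rightarrow> real"
  assumes prob: "prob_space M"
    and Xmeas: "\<And>j. (\<lambda>w. X w j) \<in> borel_measurable M"
    and Ymeas: "Y \<in> borel_measurable M"
    and mean0: "\<And>j. (\<integral>w. X w j \<partial>M) = 0"
    and model: "\<And>w. w \<in> space M \<Longrightarrow> Y w = lin bstar X w + eps w"
    and noise: "AE w in M. real_cond_exp M (vimage_algebra (space M) X (Pi\<^sub>M UNIV (\<lambda>_. borel))) eps w = 0"
    and rho_pos: "0 < rho" and rho_L: "rho \<le> L"
    and eig: "\<And>F mu. card F = card (supp bstar) \<Longrightarrow> eigval_on (covm M X) F mu \<Longrightarrow> rho \<le> mu \<and> mu \<le> L"
    and incoh: "\<And>F j v. card F = card (supp bstar) \<Longrightarrow> j \<notin> F \<Longrightarrow>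
                 (\<forall>i\<in>F. (\<Sum>k\<in>F. covm M X i k * v k) = covm M X i j) \<Longrightarrow> (\<Sum>k\<in>F. \<bar>v k\<bar>) < 1"
    and ybound: "AE w in M. \<bar>Y w\<bar> < 1"
    and xbound: "AE w in M. \<forall>j. \<bar>X w j\<bar> < Mx"
    and Ssub: "S \<subset> supp bstar"
    and bS_supp: "supp bS \<subseteq> S"
    and bS_min: "\<And>b. supp b \<subseteq> S \<Longrightarrow> risk M X Y bS \<le> risk M X Y b"
  shows "(INF p \<in> (UNIV :: real set) \<times> (supp bstar - S).
            \<integral>w. (lin bS X w + fst p * bstar (snd p) * X w (snd p) - Y w)^2 \<partial>M)
         \<le> (\<integral>w. (lin bS X w - Y w)^2 \<partial>M)
            - 1 / (real (card (supp bstar)) - real (card S)) * (rho / L)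
              * (\<integral>w. (lin (\<lambda>j. bstar j - bS j) X w)^2 \<partial>M)"
proof -
  have bounded_X: "bounded_rv M (\<lambda>w. X w j)" for j
    by (intro bounded_rvI[where B = Mx] Xmeas eventually_mono[OF xbound]) (simp add: less_imp_le)
  have bounded_Y: "bounded_rv M Y"
    by (intro bounded_rvI[where B = 1] Ymeas eventually_mono[OF ybound]) (simp add: less_imp_le)
  interpret bounded_linear_model M X Y bstar
    using prob bounded_X bounded_Y model noise by (rule bounded_linear_model_of_cond_exp)
  have "covm M X = gram" by (intro ext) (simp add: covm_def gram_def mean0)
  then have eig_gram: "\<And>mu. eigval_on gram (supp bstar) mu \<Longrightarrow> rho \<le> mu \<and> mu \<le> L"
    using eig[of "supp bstar"] by simp
  have "supp bstar \<noteq> {}" using Ssub by blast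
  note bounds = quad_form_bounds_of_eigval_bounds[OF this gram_sym eig_gram]
  have upper: "gram i i \<le> L" if "i \<in> supp bstar" for i
    using bounds(2)[where v = "\<lambda>k. if k = i then 1 else 0"] that by (simp add: quad_form_unit_vector)
  show ?thesis
    by (rule greedy_step_bound) (use Ssub bS_supp bS_min rho_pos bounds(1) upper in auto)
qed

end
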